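(* Let $M, K, P, N$ be positive integers with $M < K \le P$ and such that $P$ divides $N$. Let $\mathbf{a}_1^T, \ldots, \mathbf{a}_M^T \in \mathbb{R}^{1\times N}$ be arbitrary row vectors. Then there exists a matrix $\mathbf{F} \in \mathbb{R}^{P \times N}$ such that: (i) for every set $\chi \subseteq \{1,\ldots,P\}$ with $|\chi| = K$, each of $\mathbf{a}_1^T, \ldots, \mathbf{a}_M^T$ is a linear combination of the rows of $\mathbf{F}$ indexed by $\chi$; and (ii) every row of $\mathbf{F}$ has sparsity at most $s = \frac{N}{P}(P-K+M)$.
   Context: The sparsity of a vector $\mathbf{u} \in \mathbb{R}^N$ is its number of nonzero entries, $\|\mathbf{u}\|_0 = \#\{j : u_j \neq 0\}$. *)

theory Defs
  imports "HOL-Analysis.Analysis"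
begin

text \<open>Vectors in R^N are represented as functions nat => real, only entries j < N matter.
  Sparsity of a vector u of length N: number of indices j < N with u j nonzero.\<close>
definition sparsity :: "nat \<Rightarrow> (nat \<Rightarrow> real) \<Rightarrow> nat" where
  "sparsity N u = card {j. j < N \<and> u j \<noteq> 0}"

definition lin_comb_of_rows :: "nat \<Rightarrow> (nat \<Rightarrow> nat \<Rightarrow> real) \<Rightarrow> nat set \<Rightarrow> (nat \<Rightarrow> real) \<Rightarrow> bool" where
  "lin_comb_of_rows N F chi v \<longleftrightarrow> (\<exists>c :: nat \<Rightarrow> real. \<forall>j<N. v j = (\<Sum>p\<in>chi. c p * F p j))"

end

theory Submission
  imports Defs "HOL-Computational_Algebra.Polynomial"
begin

text \<open>Cut the columns into P blocks of width N/P. In column j, row p carries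
  \<open>\<Sum>m<M. R\<^sub>j\<^sub>m(p) a\<^sub>m(j)\<close>, where \<open>R\<^sub>j\<^sub>m\<close> is a real polynomial of degree \<open>< K\<close> that vanishes at
  a prescribed set of at most K - M rows and equals \<open>\<delta>\<^sub>i\<^sub>m\<close> at M auxiliary nodes \<open>\<beta>\<^sub>i\<close>.
  Since the degree is below K, Lagrange interpolation on any K rows recovers
  \<open>R\<^sub>j\<^sub>m(\<beta>\<^sub>i)\<close>, with weights depending only on the chosen rows and on i; this
  recovers \<open>a\<^sub>i\<close>. Choosing the vanishing rows of block t as the rows at cyclic
  distance at least P - K + M from t, every block has K - M vanishing rows while every
  row is nonzero in only P - K + M blocks.\<close>

lemma degree_prod_linear_factors:
  fixes x :: "'b \<Rightarrow> 'a::idom"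
  shows "degree (\<Prod>q\<in>A. [:- x q, 1:]) = card A"
  by (subst degree_prod_sum_eq) auto

lemma poly_eq_lagrange_interpolation:
  fixes R :: "'a::field poly" and x :: "'b \<Rightarrow> 'a"
  assumes A: "finite A" and inj: "inj_on x A" and deg: "degree R < card A"
  shows "poly R y = (\<Sum>p\<in>A. poly R (x p) * (\<Prod>q\<in>A-{p}. (y - x q) / (x p - x q)))"
proof -
  define L where "L = (\<Sum>p\<in>A. smult (poly R (x p) / (\<Prod>q\<in>A-{p}. x p - x q)) (\<Prod>q\<in>A-{p}. [:- x q, 1:]))"
  have poly_L: "poly L y = (\<Sum>p\<in>A. poly R (x p) * (\<Prod>q\<in>A-{p}. (y - x q) / (x p - x q)))" for y
    unfolding L_def poly_sum poly_smult poly_prod by (simp add: prod_dividef)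
  have card_image_A: "card (x ` A) = card A"
    using inj by (rule card_image)
  have "degree L \<le> card A - 1"
    unfolding L_def
    by (intro degree_sum_le order_trans[OF degree_smult_le]) (simp_all add: degree_prod_linear_factors A)
  with deg card_image_A have deg_L: "degree L < card (x ` A)"
    by linarith
  have "poly R z = poly L z" if "z \<in> x ` A" for z
  proof -
    from that obtain a where a: "a \<in> A" "z = x a" by blast
    have "poly L (x a) = poly R (x a) * (\<Prod>q\<in>A-{a}. (x a - x q) / (x a - x q))
        + (\<Sum>p\<in>A-{a}. poly R (x p) * (\<Prod>q\<in>A-{p}. (x a - x q) / (x p - x q)))"
      unfolding poly_L using sum.remove[OF A a(1)] by blast
    also have "(\<Prod>q\<in>A-{a}. (x a - x q) / (x a - x q)) = 1"
      using inj a(1) by (intro prod.neutral) (auto dest: inj_onD)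
    also have "(\<Sum>p\<in>A-{a}. poly R (x p) * (\<Prod>q\<in>A-{p}. (x a - x q) / (x p - x q))) = 0"
      using A a(1) by (intro sum.neutral ballI) (auto intro!: prod_zero)
    finally show ?thesis using a by simp
  qed
  moreover have "degree R < card (x ` A)"
    using deg card_image_A by simp
  ultimately have "R = L"
    using deg_L by (rule poly_eqI_degree)
  then have "poly R y = poly L y" by simp
  also note poly_L
  finally show ?thesis .
qed

lemma exists_poly_vanishing_with_unit_values:
  fixes Z :: "'a::field set" and \<beta> :: "nat \<Rightarrow> 'a"
  assumes Z: "finite Z" and inj: "inj_on \<beta> {..<M}" and outside: "\<forall>i<M. \<beta> i \<notin> Z" and m: "m < M"
  shows "\<exists>R. degree R < card Z + M \<and> (\<forall>z\<in>Z. poly R z = 0)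
             \<and> (\<forall>i<M. poly R (\<beta> i) = (if i = m then 1 else 0))"
proof -
  define Q where "Q = (\<Prod>z\<in>Z. [:- z, 1:]) * (\<Prod>i\<in>{..<M}-{m}. [:- \<beta> i, 1:])"
  have poly_Q: "poly Q y = (\<Prod>z\<in>Z. y - z) * (\<Prod>i\<in>{..<M}-{m}. y - \<beta> i)" for y
    by (simp add: Q_def poly_prod)
  have "degree Q < card Z + M"
    unfolding Q_def using m by (intro le_less_trans[OF degree_mult_le]) (simp add: degree_prod_linear_factors)
  moreover have "poly Q (\<beta> m) \<noteq> 0"
    using Z outside m inj by (auto simp: poly_Q inj_on_def)
  moreover have "poly Q (\<beta> i) = 0" if "i < M" "i \<noteq> m" for i
    using that by (auto simp: poly_Q)
  ultimately show ?thesis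
    using Z by (intro exI[of _ "smult (1 / poly Q (\<beta> m)) Q"]) (auto simp: poly_Q)
qed

lemma lin_comb_of_rows_by_interpolation:
  fixes R :: "nat \<Rightarrow> nat \<Rightarrow> real poly" and x :: "nat \<Rightarrow> real"
  assumes chi: "finite chi" "inj_on x chi" and i: "i < M"
    and deg: "\<forall>j<N. \<forall>m<M. degree (R j m) < card chi"
    and unit: "\<forall>j<N. \<forall>m<M. poly (R j m) (\<beta> i) = (if m = i then 1 else 0)"
  shows "lin_comb_of_rows N (\<lambda>p j. \<Sum>m<M. poly (R j m) (x p) * a m j) chi (a i)"
  unfolding lin_comb_of_rows_def
proof (intro exI allI impI)
  define c where "c p = (\<Prod>q\<in>chi-{p}. (\<beta> i - x q) / (x p - x q))" for p
  fix j assume j: "j < N"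
  have "(\<Sum>p\<in>chi. c p * (\<Sum>m<M. poly (R j m) (x p) * a m j))
      = (\<Sum>m<M. a m j * (\<Sum>p\<in>chi. poly (R j m) (x p) * c p))"
    by (simp add: sum_distrib_left sum_distrib_right mult_ac sum.swap[of _ chi])
  also have "\<dots> = (\<Sum>m<M. a m j * poly (R j m) (\<beta> i))"
    using j deg by (intro sum.cong refl) (simp add: c_def poly_eq_lagrange_interpolation[OF chi])
  also have "\<dots> = (\<Sum>m<M. if m = i then a m j else 0)"
    using j unit by (intro sum.cong refl) simp
  also have "\<dots> = a i j"
    using i by simp
  finally show "a i j = (\<Sum>p\<in>chi. c p * (\<Sum>m<M. poly (R j m) (x p) * a m j))" ..
qed

definition cyclic_offset :: "nat \<Rightarrow> nat \<Rightarrow> nat \<Rightarrow> nat" where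
  "cyclic_offset P t p = (if t \<le> p then p - t else p + P - t)"

lemma card_cyclic_offset_ge:
  assumes "t < P"
  shows "card {p. p < P \<and> d \<le> cyclic_offset P t p} \<le> P - d"
proof -
  have "card {p. p < P \<and> d \<le> cyclic_offset P t p} \<le> card {d..<P}"
    using assms by (intro card_inj_on_le[of "cyclic_offset P t"]) (auto simp: cyclic_offset_def inj_on_def)
  then show ?thesis by simp
qed

lemma card_cyclic_offset_less:
  assumes "p < P"
  shows "card {t. t < P \<and> cyclic_offset P t p < d} \<le> d"
proof -
  have "card {t. t < P \<and> cyclic_offset P t p < d} \<le> card {..<d}"
    using assms by (intro card_inj_on_le[of "\<lambda>t. cyclic_offset P t p"]) (auto simp: cyclic_offset_def inj_on_def)
  then show ?thesis by simp
qed

lemma sparsity_le_card_blocks: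
  assumes T: "finite T" and n: "0 < n" and zero: "\<forall>j<N. j div n \<notin> T \<longrightarrow> u j = 0"
  shows "sparsity N u \<le> card T * n"
proof -
  have "{j. j < N \<and> u j \<noteq> 0} \<subseteq> (\<lambda>(t, r). t * n + r) ` (T \<times> {..<n})"
  proof
    fix j assume "j \<in> {j. j < N \<and> u j \<noteq> 0}"
    with zero have "(j div n, j mod n) \<in> T \<times> {..<n}" using n by auto
    then show "j \<in> (\<lambda>(t, r). t * n + r) ` (T \<times> {..<n})"
      by (rule rev_image_eqI) simp
  qed
  then have "sparsity N u \<le> card ((\<lambda>(t, r). t * n + r) ` (T \<times> {..<n}))"
    unfolding sparsity_def using T by (intro card_mono) auto
  also have "\<dots> \<le> card T * n"
    using card_image_le[of "T \<times> {..<n}" "\<lambda>(t, r). t * n + r"] T by (simp add: card_cartesian_product)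
  finally show ?thesis .
qed

lemma exists_rows_vanishing_on_pattern:
  fixes Z :: "nat \<Rightarrow> nat set" and a :: "nat \<Rightarrow> nat \<Rightarrow> real"
  assumes Z: "\<forall>j<N. finite (Z j) \<and> card (Z j) + M \<le> K"
  shows "\<exists>F. (\<forall>j<N. \<forall>p\<in>Z j. F p j = 0)
           \<and> (\<forall>chi. finite chi \<and> card chi = K \<longrightarrow> (\<forall>i<M. lin_comb_of_rows N F chi (a i)))"
proof -
  define \<beta> :: "nat \<Rightarrow> real" where "\<beta> i = - real (Suc i)" for i
  have "\<forall>j m. \<exists>R. j < N \<and> m < M \<longrightarrow> degree R < K \<and> (\<forall>p\<in>Z j. poly R (real p) = 0)
          \<and> (\<forall>i<M. poly R (\<beta> i) = (if i = m then 1 else 0))"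
  proof (intro allI)
    fix j m
    show "\<exists>R. j < N \<and> m < M \<longrightarrow> degree R < K \<and> (\<forall>p\<in>Z j. poly R (real p) = 0)
          \<and> (\<forall>i<M. poly R (\<beta> i) = (if i = m then 1 else 0))"
    proof (cases "j < N \<and> m < M")
      case True
      with Z have "finite (Z j)" and card_le: "card (Z j) + M \<le> K"
        by auto
      moreover have "inj_on \<beta> {..<M}" and "\<forall>i<M. \<beta> i \<notin> real ` Z j"
        by (auto simp: \<beta>_def inj_on_def)
      ultimately have "\<exists>R. degree R < card (real ` Z j) + M \<and> (\<forall>z\<in>real ` Z j. poly R z = 0)
          \<and> (\<forall>i<M. poly R (\<beta> i) = (if i = m then 1 else 0))"
        using True by (intro exists_poly_vanishing_with_unit_values) auto
      then obtain R where "degree R < card (Z j) + M" "\<forall>p\<in>Z j. poly R (real p) = 0"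
          "\<forall>i<M. poly R (\<beta> i) = (if i = m then 1 else 0)"
        by (auto simp: card_image)
      with card_le show ?thesis
        by (intro exI[of _ R]) auto
    qed blast
  qed
  then obtain R where R: "\<And>j m. j < N \<Longrightarrow> m < M \<Longrightarrow> degree (R j m) < K
          \<and> (\<forall>p\<in>Z j. poly (R j m) (real p) = 0) \<and> (\<forall>i<M. poly (R j m) (\<beta> i) = (if i = m then 1 else 0))"
    by metis
  define F where "F = (\<lambda>p j. \<Sum>m<M. poly (R j m) (real p) * a m j)"
  have "\<forall>j<N. \<forall>p\<in>Z j. F p j = 0"
    using R by (simp add: F_def)
  moreover have "lin_comb_of_rows N F chi (a i)" if "finite chi" "card chi = K" "i < M" for chi i
    unfolding F_def using that R by (intro lin_comb_of_rows_by_interpolation[where \<beta> = \<beta>]) (auto simp: inj_on_def)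
  ultimately show ?thesis
    by blast
qed

theorem theorem1:
  fixes M K P N :: nat and a :: "nat \<Rightarrow> nat \<Rightarrow> real"
  assumes "0 < M" and "M < K" and "K \<le> P" and "0 < N" and "P dvd N"
  shows "\<exists>F :: nat \<Rightarrow> nat \<Rightarrow> real.
           (\<forall>chi. chi \<subseteq> {0..<P} \<and> card chi = K \<longrightarrow>
              (\<forall>i<M. lin_comb_of_rows N F chi (a i)))
         \<and> (\<forall>p<P. real (sparsity N (F p)) \<le> real N / real P * real (P - K + M))"
proof -
  define n where "n = N div P"
  define d where "d = P - K + M"
  define Z where "Z j = {p. p < P \<and> d \<le> cyclic_offset P (j div n) p}" for j
  have N: "N = P * n" and n: "0 < n"
    using assms by (auto simp: n_def)
  have block: "j div n < P" if "j < N" for j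
    using that N n by (simp add: div_less_iff_less_mult mult.commute)
  have "card (Z j) + M \<le> K" if "j < N" for j
    using card_cyclic_offset_ge[OF block[OF that], of d] assms by (simp add: Z_def d_def)
  then obtain F where F_zero: "\<forall>j<N. \<forall>p\<in>Z j. F p j = 0"
      and recover: "\<forall>chi. finite chi \<and> card chi = K \<longrightarrow> (\<forall>i<M. lin_comb_of_rows N F chi (a i))"
    using exists_rows_vanishing_on_pattern[of N Z M K a] by (auto simp: Z_def)
  have "real (sparsity N (F p)) \<le> real N / real P * real (P - K + M)" if "p < P" for p
  proof -
    have "sparsity N (F p) \<le> card {t. t < P \<and> cyclic_offset P t p < d} * n"
      using n that F_zero block by (intro sparsity_le_card_blocks) (auto simp: Z_def)
    also have "\<dots> \<le> d * n"
      using card_cyclic_offset_less[OF that, of d] by simp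
    finally have "real (sparsity N (F p)) \<le> real d * real n"
      by (metis of_nat_le_iff of_nat_mult)
    also have "\<dots> = real N / real P * real d"
      using N that by simp
    finally show ?thesis by (simp add: d_def)
  qed
  with recover show ?thesis
    by (meson finite_atLeastLessThan finite_subset)
qed

end
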